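(* Let $\tau$ denote the divisor function and $$T_n=\sum_{0<k<n}\frac{\tau(k)\tau(n-k)}{\sqrt{n-k}\sqrt{k}}.$$ Then $T_n\ge\frac{6+o(1)}{\pi}(\log n)^2$ as $n\to\infty$. *)

theory Defs
  imports "HOL-Analysis.Analysis"
begin

definition divisor_count :: "nat \<Rightarrow> nat" where
  "divisor_count k = card {d. d dvd k \<and> d > 0}"

definition T :: "nat \<Rightarrow> real" where
  "T n = (\<Sum>k\<in>{0<..<n}. real (divisor_count k) * real (divisor_count (n - k))
                          / (sqrt (real (n - k)) * sqrt (real k)))"

end

(*
  Take A about sqrt (n / K). Every k in (A^2, n / 2) has tau k >= 2 #{a <= A. a dvd k}, since
  each such a is paired with the divisor k div a > A; hence tau k * tau (n - k) is at least four
  times the number of pairs (a, c) in [1, A]^2 with a dvd k and c dvd n - k. Exchanging sums, a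
  coprime pair (a, c) collects the weights 1 / sqrt (k (n - k)) over an arithmetic progression of
  difference a c (Chinese remainder theorem), and this sum is at least 1 / (a c) times an
  increment of the primitive arcsin (2 t / n - 1), which tends to pi / 2 as K grows. So
  T n >= 8 (pi / 2 - o(1)) S(A), where S(A) sums 1 / (a c) over coprime a, c <= A.
  Writing each pair as g times a coprime pair gives (H_A)^2 <= zeta(2) S(A), and
  H_A >= ln A, which is about (ln n) / 2; altogether T n >= (6 / pi - o(1)) (ln n)^2.
*)
theory Submission
  imports Defs "HOL-Number_Theory.Cong" "HOL-Real_Asymp.Real_Asymp"
begin

section \<open>Reciprocal sums over coprime pairs\<close>

definition coprime_pairs :: "nat \<Rightarrow> (nat \<times> nat) set" where
  "coprime_pairs N = {(a, c) \<in> {1..N} \<times> {1..N}. coprime a c}"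

definition coprime_recip_sum :: "nat \<Rightarrow> real" where
  "coprime_recip_sum N = (\<Sum>(a, c) \<in> coprime_pairs N. 1 / (real a * real c))"

lemma finite_coprime_pairs: "finite (coprime_pairs N)"
  by (rule finite_subset[of _ "{1..N} \<times> {1..N}"]) (auto simp: coprime_pairs_def)

lemma coprime_recip_sum_nonneg: "0 \<le> coprime_recip_sum N"
  unfolding coprime_recip_sum_def by (intro sum_nonneg) auto

lemma harm_squared_eq_pair_sum:
  "(harm N :: real)\<^sup>2 = (\<Sum>(a, c) \<in> {1..N} \<times> {1..N}. 1 / (real a * real c))"
  by (simp add: harm_def power2_eq_square sum_product sum.cartesian_product field_simps)

lemma inj_on_scale_coprime:
  "inj_on (\<lambda>(g, a, c). (g * a, g * c :: nat)) {(g, a, c). 0 < g \<and> coprime a c}"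
proof (rule inj_onI, clarsimp)
  fix g a c g' a' c' :: nat
  assume "0 < g" "coprime a c" "coprime a' c'" and eq: "g * a = g' * a'" "g * c = g' * c'"
  have "g = gcd (g * a) (g * c)" "g' = gcd (g' * a') (g' * c')"
    using \<open>coprime a c\<close> \<open>coprime a' c'\<close> by (simp_all add: gcd_mult_distrib_nat[symmetric])
  with eq have "g = g'" by simp
  with eq \<open>0 < g\<close> show "g = g' \<and> a = a' \<and> c = c'" by auto
qed

lemma pairs_subset_scaled_coprime_pairs:
  "{1..N} \<times> {1..N} \<subseteq> (\<lambda>(g, a, c). (g * a, g * c)) ` ({1..N} \<times> coprime_pairs N)"
proof clarify
  fix a c assume ac: "a \<in> {1..N}" "c \<in> {1..N}"
  define g where "g = gcd a c"
  have "0 < g" "g \<le> a" using ac by (auto simp: g_def gcd_le1_nat)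
  moreover have "0 < a div g" "0 < c div g"
    using ac by (auto simp: g_def div_greater_zero_iff gcd_le1_nat gcd_le2_nat)
  then have "(a div g, c div g) \<in> coprime_pairs N"
    using ac div_gcd_coprime[of a c]
    by (auto simp: coprime_pairs_def g_def intro: order_trans[OF div_le_dividend])
  moreover have "(a, c) = (g * (a div g), g * (c div g))" by (simp add: g_def)
  ultimately show "(a, c) \<in> (\<lambda>(g, a, c). (g * a, g * c)) ` ({1..N} \<times> coprime_pairs N)"
    using ac by (intro rev_image_eqI[of "(g, a div g, c div g)"]) auto
qed

lemma harm_squared_le_coprime_recip_sum:
  "(harm N :: real)\<^sup>2 \<le> (\<Sum>g=1..N. 1 / (real g)\<^sup>2) * coprime_recip_sum N"
proof -
  let ?scale = "\<lambda>(g, a, c). (g * a, g * c :: nat)"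
  let ?f = "\<lambda>(a, c). 1 / (real a * real c)"
  have inj: "inj_on ?scale ({1..N} \<times> coprime_pairs N)"
    by (rule inj_on_subset[OF inj_on_scale_coprime]) (auto simp: coprime_pairs_def)
  have "(harm N :: real)\<^sup>2 = sum ?f ({1..N} \<times> {1..N})"
    by (rule harm_squared_eq_pair_sum)
  also have "\<dots> \<le> sum ?f (?scale ` ({1..N} \<times> coprime_pairs N))"
    by (intro sum_mono2 pairs_subset_scaled_coprime_pairs finite_imageI)
      (auto simp: finite_coprime_pairs)
  also have "\<dots> = (\<Sum>(g, a, c) \<in> {1..N} \<times> coprime_pairs N. 1 / (real g)\<^sup>2 * (1 / (real a * real c)))"
    unfolding sum.reindex[OF inj] by (intro sum.cong) (auto simp: power2_eq_square)
  also have "\<dots> = (\<Sum>g=1..N. \<Sum>(a, c) \<in> coprime_pairs N. 1 / (real g)\<^sup>2 * (1 / (real a * real c)))"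
    by (simp add: sum.cartesian_product)
  also have "\<dots> = (\<Sum>g=1..N. 1 / (real g)\<^sup>2) * coprime_recip_sum N"
    by (simp add: coprime_recip_sum_def sum_product split_def)
  finally show ?thesis .
qed

lemma sum_inverse_squares_le: "(\<Sum>g=1..N. 1 / (real g)\<^sup>2) \<le> pi\<^sup>2 / 6"
proof -
  have "(\<Sum>g=1..N. 1 / (real g)\<^sup>2) = (\<Sum>i<N. 1 / real ((i + 1)\<^sup>2))"
    by (induction N) auto
  also have "\<dots> \<le> (\<Sum>i. 1 / real ((i + 1)\<^sup>2))"
    using inverse_squares_sums by (intro sum_le_suminf) (auto simp: sums_iff)
  also have "\<dots> = pi\<^sup>2 / 6"
    using inverse_squares_sums by (simp add: sums_iff)
  finally show ?thesis .
qed

lemma ln_squared_le_coprime_recip_sum: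
  "6 / pi\<^sup>2 * (ln (real N))\<^sup>2 \<le> coprime_recip_sum N"
proof (cases "N = 0")
  case False
  have "ln (real N) \<le> ln (real N + 1)" using False by simp
  also have "\<dots> \<le> harm N" by (rule ln_le_harm)
  finally have "ln (real N) \<le> harm N" .
  then have "(ln (real N))\<^sup>2 \<le> (harm N)\<^sup>2"
    using False by (intro power_mono) auto
  also have "\<dots> \<le> pi\<^sup>2 / 6 * coprime_recip_sum N"
    using harm_squared_le_coprime_recip_sum sum_inverse_squares_le coprime_recip_sum_nonneg
    by (meson mult_right_mono order_trans)
  finally show ?thesis by (simp add: field_simps)
qed (simp add: coprime_recip_sum_nonneg)

section \<open>The arcsine weight\<close>

lemma sum_ge_telescoped_increments:
  fixes w F :: "real \<Rightarrow> real" and S :: "nat set" and lo m :: real and q :: nat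
  assumes "finite S" and "0 < m" and "1 \<le> q"
    and w_nonneg: "\<And>k. k \<in> S \<Longrightarrow> 0 \<le> w k"
    and w_antimono: "\<And>x y. lo < x \<Longrightarrow> x \<le> y \<Longrightarrow> y \<le> lo + q * m \<Longrightarrow> w y \<le> w x"
    and F_increment: "\<And>x. lo < x \<Longrightarrow> x + m \<le> lo + q * m \<Longrightarrow> F (x + m) - F x \<le> m * w x"
    and hits: "\<And>j. j < q \<Longrightarrow> \<exists>k\<in>S. lo + j * m < k \<and> k \<le> lo + (j + 1) * m"
  shows "F (lo + q * m) - F (lo + m) \<le> m * (\<Sum>k\<in>S. w k)"
proof -
  define y where "y j = lo + real j * m" for j
  have "\<forall>j<q. \<exists>k. k \<in> S \<and> y j < k \<and> k \<le> y (Suc j)"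
    using hits by (auto simp: y_def algebra_simps)
  then obtain s where s: "\<And>j. j < q \<Longrightarrow> s j \<in> S \<and> y j < s j \<and> s j \<le> y (Suc j)"
    by metis
  have y_mono: "i \<le> j \<Longrightarrow> y i \<le> y j" for i j
    using \<open>0 < m\<close> by (simp add: y_def mult_right_mono)
  \<comment> \<open>As w decreases, the point s j of block j bounds the increment of F over block j + 1,
    so the increment over the first block is lost.\<close>
  have step: "F (y (Suc (Suc j))) - F (y (Suc j)) \<le> m * w (s j)" if "j < q - 1" for j
  proof -
    have "y (Suc (Suc j)) \<le> y q" using that by (intro y_mono) simp
    then have "F (y (Suc j) + m) - F (y (Suc j)) \<le> m * w (y (Suc j))"
      using \<open>0 < m\<close> by (intro F_increment) (simp_all add: y_def algebra_simps add_pos_nonneg)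
    also have "w (y (Suc j)) \<le> w (s j)"
    proof (rule w_antimono)
      have "j < q" using that by simp
      then show "lo < s j" using s[of j] y_mono[of 0 j] by (simp add: y_def)
      show "s j \<le> y (Suc j)" using s[of j] that by simp
      show "y (Suc j) \<le> lo + q * m" using y_mono[of "Suc j" q] that by (simp add: y_def)
    qed
    finally show ?thesis using \<open>0 < m\<close> by (simp add: y_def algebra_simps)
  qed
  have s_inj: "inj_on s {..<q - 1}"
  proof (rule linorder_inj_onI')
    fix i j assume "i \<in> {..<q - 1}" "j \<in> {..<q - 1}" "i < j"
    then have "real (s i) \<le> y (Suc i)" "y (Suc i) \<le> y j" "y j < real (s j)"
      using s[of i] s[of j] y_mono[of "Suc i" j] by auto
    then show "s i \<noteq> s j" by linarith
  qed
  have "F (lo + q * m) - F (lo + m) = (\<Sum>j<q - 1. F (y (Suc (Suc j))) - F (y (Suc j)))"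
    using \<open>1 \<le> q\<close> by (subst sum_lessThan_telescope) (simp add: y_def)
  also have "\<dots> \<le> (\<Sum>j<q - 1. m * w (s j))"
    using step by (intro sum_mono) auto
  also have "\<dots> = m * (\<Sum>k\<in>s ` {..<q - 1}. w k)"
    unfolding sum_distrib_left sum.reindex[OF s_inj] by simp
  also have "\<dots> \<le> m * (\<Sum>k\<in>S. w k)"
  proof (intro mult_left_mono sum_mono2)
    show "s ` {..<q - 1} \<subseteq> S" using s by auto
  qed (use \<open>finite S\<close> \<open>0 < m\<close> w_nonneg in auto)
  finally show ?thesis .
qed

definition arcsin_density :: "real \<Rightarrow> real \<Rightarrow> real" where
  "arcsin_density n t = 1 / sqrt (t * (n - t))"

definition arcsin_primitive :: "real \<Rightarrow> real \<Rightarrow> real" where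
  "arcsin_primitive n t = arcsin (2 * t / n - 1)"

lemma arcsin_primitive_has_derivative:
  assumes "0 < t" "t < n"
  shows "(arcsin_primitive n has_real_derivative arcsin_density n t) (at t)"
proof -
  have n: "0 < n" using assms by simp
  have "-1 < 2 * t / n - 1" "2 * t / n - 1 < 1" using assms by (simp_all add: field_simps)
  then have "((\<lambda>t. arcsin (2 * t / n - 1)) has_real_derivative
      inverse (sqrt (1 - (2 * t / n - 1)\<^sup>2)) * (2 / n)) (at t)"
    by (auto intro!: derivative_eq_intros)
  moreover have "1 - (2 * t / n - 1)\<^sup>2 = (2 / n)\<^sup>2 * (t * (n - t))"
    using n by (simp add: field_simps power2_eq_square)
  then have "sqrt (1 - (2 * t / n - 1)\<^sup>2) = 2 / n * sqrt (t * (n - t))"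
    using n by (simp only: real_sqrt_mult real_sqrt_abs) simp
  then have "inverse (sqrt (1 - (2 * t / n - 1)\<^sup>2)) * (2 / n) = arcsin_density n t"
    using n assms by (simp add: arcsin_density_def field_simps)
  ultimately show ?thesis by (simp add: arcsin_primitive_def[abs_def])
qed

lemma arcsin_density_nonneg: "0 \<le> t \<Longrightarrow> t \<le> n \<Longrightarrow> 0 \<le> arcsin_density n t"
  by (simp add: arcsin_density_def)

lemma arcsin_density_antimono:
  assumes "0 < s" "s \<le> t" "t \<le> n / 2"
  shows "arcsin_density n t \<le> arcsin_density n s"
proof -
  have "t * (n - t) - s * (n - s) = (t - s) * (n - s - t)" by (simp add: algebra_simps)
  also have "\<dots> \<ge> 0" using assms by (intro mult_nonneg_nonneg) auto
  finally have "s * (n - s) \<le> t * (n - t)" by simp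
  moreover have "0 < s * (n - s)" using assms by simp
  ultimately show ?thesis
    unfolding arcsin_density_def by (intro divide_left_mono mult_pos_pos) auto
qed

lemma arcsin_primitive_increment_le:
  assumes "0 < x" "x \<le> y" "y \<le> n / 2"
  shows "arcsin_primitive n y - arcsin_primitive n x \<le> (y - x) * arcsin_density n x"
proof (cases "x = y")
  case False
  then have "x < y" using assms by simp
  have "\<exists>z. x < z \<and> z < y \<and>
      arcsin_primitive n y - arcsin_primitive n x = (y - x) * arcsin_density n z"
    by (rule MVT2[OF \<open>x < y\<close>]) (rule arcsin_primitive_has_derivative, use assms in auto)
  then obtain z where z: "x < z" "z < y"
    and mvt: "arcsin_primitive n y - arcsin_primitive n x = (y - x) * arcsin_density n z"
    by blast
  have "arcsin_density n z \<le> arcsin_density n x"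
    using z assms by (intro arcsin_density_antimono) auto
  then show ?thesis using mvt \<open>x < y\<close> by (simp add: mult_left_mono)
qed simp

lemma arcsin_primitive_mono:
  assumes "0 \<le> x" "x \<le> y" "y \<le> n" "0 < n"
  shows "arcsin_primitive n x \<le> arcsin_primitive n y"
  unfolding arcsin_primitive_def using assms
  by (intro arcsin_le_arcsin) (auto simp: field_simps divide_right_mono)

lemma arcsin_increment_le_block_sum:
  fixes S :: "nat set" and n lo m q :: nat
  assumes "finite S" "0 < lo" "0 < m" "1 \<le> q" "2 * (lo + q * m) \<le> n"
    and "\<And>k. k \<in> S \<Longrightarrow> k \<le> n"
    and "\<And>j. j < q \<Longrightarrow> \<exists>k\<in>S. lo + j * m < k \<and> k \<le> lo + Suc j * m"
  shows "arcsin_primitive n (lo + q * m) - arcsin_primitive n (lo + m)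
    \<le> m * (\<Sum>k\<in>S. arcsin_density n k)"
proof -
  have "arcsin_primitive n (real lo + real q * real m) - arcsin_primitive n (real lo + real m)
    \<le> real m * (\<Sum>k\<in>S. arcsin_density n k)"
  proof (rule sum_ge_telescoped_increments)
    have "real (2 * (lo + q * m)) \<le> real n" using assms(5) by (simp only: of_nat_le_iff)
    then have top: "real lo + real q * real m \<le> real n / 2" by simp
    show "arcsin_density n y \<le> arcsin_density n x"
      if "real lo < x" "x \<le> y" "y \<le> real lo + real q * real m" for x y
    proof (rule arcsin_density_antimono)
      show "0 < x" using that(1) assms(2) by linarith
      show "y \<le> real n / 2" using that(3) top by linarith
    qed (fact that(2))
    show "arcsin_primitive n (x + m) - arcsin_primitive n x \<le> m * arcsin_density n x"
      if "real lo < x" "x + m \<le> real lo + real q * real m" for x :: real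
    proof -
      have "0 < x" "x + m \<le> real n / 2" using that assms(2) top by linarith+
      then show ?thesis using arcsin_primitive_increment_le[of x "x + m" n] assms(3) by simp
    qed
    show "\<exists>k\<in>S. real lo + real j * real m < real k \<and> real k \<le> real lo + (real j + 1) * real m"
      if j: "j < q" for j
    proof -
      obtain k where "k \<in> S" "lo + j * m < k" "k \<le> lo + Suc j * m" using assms(7)[OF j] by blast
      then have "real (lo + j * m) < real k" "real k \<le> real (lo + Suc j * m)"
        by (simp_all only: of_nat_less_iff of_nat_le_iff)
      then show ?thesis using \<open>k \<in> S\<close> by (intro bexI[of _ k]) (simp_all add: algebra_simps)
    qed
    show "0 \<le> arcsin_density n k" if "k \<in> S" for k
      using assms(6)[OF that] by (intro arcsin_density_nonneg) auto
  qed (use assms in auto)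
  then show ?thesis by simp
qed

section \<open>Arithmetic progressions\<close>

lemma cong_exists_in_interval:
  fixes m x y :: nat
  assumes "0 < m"
  shows "\<exists>k. y < k \<and> k \<le> y + m \<and> [k = x] (mod m)"
proof -
  define r where "r = x mod m"
  define t where "t = (y + m - r) div m"
  have "r < m" using assms by (simp add: r_def)
  have "m * t \<le> y + m - r"
    by (simp add: t_def)
  moreover have "y + m - r < m * t + m"
    using assms unfolding t_def
    by (metis div_mult_mod_eq mod_less_divisor add_less_cancel_left mult.commute)
  moreover have "[r + m * t = x] (mod m)"
    by (simp add: r_def cong_def)
  ultimately show ?thesis
    using \<open>r < m\<close> by (intro exI[of _ "r + m * t"]) auto
qed

lemma chinese_remainder_in_interval:
  fixes a c n y :: nat
  assumes "coprime a c" "0 < a" "0 < c" "y + a * c \<le> n"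
  shows "\<exists>k. y < k \<and> k \<le> y + a * c \<and> a dvd k \<and> c dvd (n - k)"
proof -
  obtain x where x: "[x = 0] (mod a)" "[x = n] (mod c)"
    using binary_chinese_remainder_nat[OF \<open>coprime a c\<close>] by blast
  obtain k where k: "y < k" "k \<le> y + a * c" "[k = x] (mod a * c)"
    using cong_exists_in_interval[of "a * c" y x] assms by auto
  have "[k = 0] (mod a)"
    using cong_trans[OF cong_modulus_mult_nat[OF k(3)] x(1)] .
  moreover have "[k = n] (mod c)"
    using cong_trans[OF cong_modulus_mult_nat[OF k(3)[unfolded mult.commute[of a c]]] x(2)] .
  then have "c dvd (n - k)"
    using k(2) assms(4) by (simp add: cong_def mod_eq_dvd_iff_nat[symmetric])
  ultimately show ?thesis using k by (auto simp: cong_0_iff)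
qed

lemma arcsin_increment_le_sum_progression:
  fixes n A a c h :: nat
  assumes "coprime a c" "0 < a" "a \<le> A" "0 < c" "c \<le> A"
    and "2 * A\<^sup>2 \<le> h" "2 * h \<le> n"
  shows "(arcsin_primitive n (h - A\<^sup>2) - arcsin_primitive n (2 * A\<^sup>2)) / (a * c)
    \<le> (\<Sum>k \<in> {k \<in> {A\<^sup>2<..h}. a dvd k \<and> c dvd (n - k)}. arcsin_density n k)"
proof -
  define m where "m = a * c"
  define q where "q = (h - A\<^sup>2) div m"
  let ?S = "{k \<in> {A\<^sup>2<..h}. a dvd k \<and> c dvd (n - k)}"
  have "0 < m" "m \<le> A\<^sup>2"
    unfolding m_def power2_eq_square using assms by (auto intro: mult_mono)
  then have "1 \<le> q" using assms(6) by (simp add: q_def Suc_le_eq div_greater_zero_iff)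
  have "0 < n" using \<open>0 < m\<close> \<open>m \<le> A\<^sup>2\<close> assms(6,7) by linarith
  have "m * q \<le> h - A\<^sup>2" by (simp add: q_def)
  moreover have "h - A\<^sup>2 < m * q + m"
    using \<open>0 < m\<close> unfolding q_def
    by (metis add.commute div_mult_mod_eq mod_less_divisor mult.commute nat_add_left_cancel_less)
  ultimately have top: "A\<^sup>2 + q * m \<le> h" "h - A\<^sup>2 \<le> A\<^sup>2 + q * m"
    using assms(6) \<open>m \<le> A\<^sup>2\<close> by (simp_all add: mult.commute)
  have "\<exists>k\<in>?S. A\<^sup>2 + j * m < k \<and> k \<le> A\<^sup>2 + Suc j * m" if "j < q" for j
  proof -
    have "Suc j * m \<le> q * m" using that by (intro mult_le_mono1) simp
    then have "A\<^sup>2 + j * m + a * c \<le> h" using top(1) by (simp add: m_def)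
    moreover obtain k where "A\<^sup>2 + j * m < k" "k \<le> A\<^sup>2 + j * m + a * c" "a dvd k" "c dvd (n - k)"
      using chinese_remainder_in_interval[OF assms(1,2,4), of "A\<^sup>2 + j * m" n] calculation assms(7)
      by auto
    ultimately show ?thesis by (intro bexI[of _ k]) (auto simp: m_def)
  qed
  then have "arcsin_primitive n (A\<^sup>2 + q * m) - arcsin_primitive n (A\<^sup>2 + m)
      \<le> m * (\<Sum>k\<in>?S. arcsin_density n k)"
    using \<open>0 < m\<close> \<open>1 \<le> q\<close> top(1) assms by (intro arcsin_increment_le_block_sum) auto
  moreover have "arcsin_primitive n (h - A\<^sup>2) \<le> arcsin_primitive n (A\<^sup>2 + q * m)"
  proof (rule arcsin_primitive_mono)
    show "real (h - A\<^sup>2) \<le> real (A\<^sup>2 + q * m)" "real (A\<^sup>2 + q * m) \<le> real n"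
      unfolding of_nat_le_iff using top assms(7) by linarith+
  qed (use \<open>0 < n\<close> in auto)
  moreover have "arcsin_primitive n (A\<^sup>2 + m) \<le> arcsin_primitive n (2 * A\<^sup>2)"
  proof (rule arcsin_primitive_mono)
    show "real (A\<^sup>2 + m) \<le> real (2 * A\<^sup>2)" "real (2 * A\<^sup>2) \<le> real n"
      unfolding of_nat_le_iff using \<open>m \<le> A\<^sup>2\<close> assms(6,7) by linarith+
  qed (use \<open>0 < n\<close> in auto)
  ultimately show ?thesis
    using \<open>0 < m\<close> by (simp add: m_def pos_divide_le_eq mult.commute)
qed

section \<open>Divisor counts and lower bounds for T\<close>

lemma divisor_count_ge_twice_small_divisors:
  fixes k A :: nat
  assumes "A\<^sup>2 < k"
  shows "2 * card {a \<in> {1..A}. a dvd k} \<le> divisor_count k"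
proof -
  define S where "S = {a \<in> {1..A}. a dvd k}"
  define D where "D = {d. d dvd k \<and> 0 < d}"
  have "0 < k" using assms by simp
  have "A < k div a" if "a \<in> S" for a
  proof -
    have "a * A \<le> A * A" using that by (simp add: S_def)
    also have "\<dots> < a * (k div a)" using assms that by (simp add: S_def power2_eq_square)
    finally show ?thesis by simp
  qed
  then have disj: "S \<inter> (\<lambda>a. k div a) ` S = {}" by (force simp: S_def)
  have inj: "inj_on (\<lambda>a. k div a) S"
  proof (rule inj_onI)
    fix a b assume "a \<in> S" "b \<in> S" "k div a = k div b"
    then have "k * b = a * k" using dvd_div_div_eq_mult[of a b k k] by (simp add: S_def)
    then show "a = b" using \<open>0 < k\<close> by simp
  qed
  have sub: "S \<union> (\<lambda>a. k div a) ` S \<subseteq> D"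
    using \<open>0 < k\<close> by (auto simp: S_def D_def div_greater_zero_iff dvd_imp_le intro: dvd_div_eq_mult)
  have "finite D" using \<open>0 < k\<close> by (simp add: D_def)
  have "finite S" by (simp add: S_def)
  have "2 * card S = card (S \<union> (\<lambda>a. k div a) ` S)"
    using card_Un_disjoint[OF \<open>finite S\<close> _ disj] card_image[OF inj] \<open>finite S\<close> by simp
  also have "\<dots> \<le> card D" using card_mono[OF \<open>finite D\<close> sub] .
  finally show ?thesis by (simp add: S_def D_def divisor_count_def)
qed

lemma card_small_divisor_pairs_le:
  fixes A k l :: nat
  assumes "A\<^sup>2 < k" "A\<^sup>2 < l"
  shows "4 * card {(a, c) \<in> {1..A} \<times> {1..A}. a dvd k \<and> c dvd l} \<le> divisor_count k * divisor_count l"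
proof -
  have "{(a, c) \<in> {1..A} \<times> {1..A}. a dvd k \<and> c dvd l}
      = {a \<in> {1..A}. a dvd k} \<times> {c \<in> {1..A}. c dvd l}" by auto
  then have "4 * card {(a, c) \<in> {1..A} \<times> {1..A}. a dvd k \<and> c dvd l}
      = (2 * card {a \<in> {1..A}. a dvd k}) * (2 * card {c \<in> {1..A}. c dvd l})"
    by (simp add: card_cartesian_product)
  also have "\<dots> \<le> divisor_count k * divisor_count l"
    using assms by (intro mult_le_mono divisor_count_ge_twice_small_divisors)
  finally show ?thesis .
qed

lemma T_ge_twice_lower_half:
  fixes n h :: nat
  assumes "2 * h < n"
  shows "2 * (\<Sum>k=1..h. real (divisor_count k) * real (divisor_count (n - k)) * arcsin_density n k)
    \<le> T n"
proof -
  define f where "f k = real (divisor_count k) * real (divisor_count (n - k))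
    / (sqrt (real (n - k)) * sqrt (real k))" for k
  have f_sym: "f (n - k) = f k" if "k \<le> n" for k
    using that by (simp add: f_def mult.commute)
  have f_eq: "f k = real (divisor_count k) * real (divisor_count (n - k)) * arcsin_density n k"
    if "k \<le> n" for k
    using that by (simp add: f_def arcsin_density_def real_sqrt_mult of_nat_diff mult.commute)
  have inj: "inj_on (\<lambda>k. n - k) {1..h}" by (rule inj_onI) (use assms in auto)
  have disj: "{1..h} \<inter> (\<lambda>k. n - k) ` {1..h} = {}" using assms by auto
  have sub: "{1..h} \<union> (\<lambda>k. n - k) ` {1..h} \<subseteq> {0<..<n}" using assms by auto
  have "(\<Sum>k\<in>(\<lambda>k. n - k) ` {1..h}. f k) = (\<Sum>k=1..h. f k)"
    unfolding sum.reindex[OF inj] using assms by (intro sum.cong) (auto simp: f_sym)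
  then have "2 * (\<Sum>k=1..h. f k) = (\<Sum>k\<in>{1..h} \<union> (\<lambda>k. n - k) ` {1..h}. f k)"
    using sum.union_disjoint[OF _ _ disj, of f] by simp
  also have "\<dots> \<le> (\<Sum>k\<in>{0<..<n}. f k)"
    using sub by (intro sum_mono2) (auto simp: f_def)
  also have "\<dots> = T n" by (simp add: T_def f_def)
  finally have "2 * (\<Sum>k=1..h. f k) \<le> T n" .
  moreover have "(\<Sum>k=1..h. f k)
      = (\<Sum>k=1..h. real (divisor_count k) * real (divisor_count (n - k)) * arcsin_density n k)"
    using assms by (intro sum.cong) (auto simp: f_eq)
  ultimately show ?thesis by simp
qed

lemma T_ge_coprime_recip_sum:
  fixes n A h :: nat
  assumes "1 \<le> A" "2 * A\<^sup>2 \<le> h" "2 * h < n"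
  shows "8 * (arcsin_primitive n (h - A\<^sup>2) - arcsin_primitive n (2 * A\<^sup>2)) * coprime_recip_sum A
    \<le> T n"
proof -
  define \<Delta> where "\<Delta> = arcsin_primitive n (h - A\<^sup>2) - arcsin_primitive n (2 * A\<^sup>2)"
  define K where "K = {A\<^sup>2<..h}"
  define P where "P = {1..A} \<times> {1..A}"
  define \<tau>w where
    "\<tau>w k = real (divisor_count k) * real (divisor_count (n - k)) * arcsin_density n k"
    for k :: nat
  have w_nonneg: "0 \<le> arcsin_density n k" if "k \<in> K" for k
    using that assms by (intro arcsin_density_nonneg) (auto simp: K_def)
  have "\<Delta> * coprime_recip_sum A = (\<Sum>(a, c) \<in> coprime_pairs A. \<Delta> / real (a * c))"
    by (simp add: coprime_recip_sum_def sum_distrib_left case_prod_beta)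
  also have "\<dots> \<le> (\<Sum>(a, c) \<in> coprime_pairs A.
      \<Sum>k \<in> {k \<in> K. a dvd k \<and> c dvd (n - k)}. arcsin_density n k)"
  proof (rule sum_mono, clarify)
    fix a c assume "(a, c) \<in> coprime_pairs A"
    then have "coprime a c" "0 < a" "a \<le> A" "0 < c" "c \<le> A" by (auto simp: coprime_pairs_def)
    from arcsin_increment_le_sum_progression[OF this assms(2)] assms(3)
    show "\<Delta> / real (a * c) \<le> (\<Sum>k \<in> {k \<in> K. a dvd k \<and> c dvd (n - k)}. arcsin_density n k)"
      by (simp add: \<Delta>_def K_def)
  qed
  also have "\<dots> \<le> (\<Sum>(a, c) \<in> P. \<Sum>k \<in> {k \<in> K. a dvd k \<and> c dvd (n - k)}. arcsin_density n k)"
    using w_nonneg by (intro sum_mono2) (auto simp: P_def coprime_pairs_def intro!: sum_nonneg)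
  also have "\<dots> = (\<Sum>k \<in> K. \<Sum>p \<in> {p \<in> P. fst p dvd k \<and> snd p dvd (n - k)}. arcsin_density n k)"
    unfolding case_prod_beta by (rule sum.swap_restrict) (simp_all add: P_def K_def)
  also have "\<dots> \<le> (\<Sum>k \<in> K. \<tau>w k / 4)"
  proof (rule sum_mono)
    fix k assume "k \<in> K"
    then have "A\<^sup>2 < k" "A\<^sup>2 < n - k" using assms by (auto simp: K_def)
    have pairs: "{p \<in> P. fst p dvd k \<and> snd p dvd (n - k)}
        = {(a, c) \<in> {1..A} \<times> {1..A}. a dvd k \<and> c dvd (n - k)}"
      unfolding P_def by (rule set_eqI) (simp add: split_beta mem_Times_iff)
    have "4 * card {p \<in> P. fst p dvd k \<and> snd p dvd (n - k)}
        \<le> divisor_count k * divisor_count (n - k)"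
      unfolding pairs by (rule card_small_divisor_pairs_le) fact+
    then have "real (4 * card {p \<in> P. fst p dvd k \<and> snd p dvd (n - k)})
        \<le> real (divisor_count k * divisor_count (n - k))"
      by (simp only: of_nat_le_iff)
    then have "4 * real (card {p \<in> P. fst p dvd k \<and> snd p dvd (n - k)})
        \<le> real (divisor_count k) * real (divisor_count (n - k))"
      by (simp only: of_nat_mult of_nat_numeral)
    from mult_right_mono[OF this w_nonneg[OF \<open>k \<in> K\<close>]]
    show "(\<Sum>p \<in> {p \<in> P. fst p dvd k \<and> snd p dvd (n - k)}. arcsin_density n k) \<le> \<tau>w k / 4"
      unfolding sum_constant \<tau>w_def by linarith
  qed
  also have "\<dots> \<le> (\<Sum>k=1..h. \<tau>w k) / 4"
    unfolding sum_divide_distrib[symmetric] using assms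
    by (intro divide_right_mono sum_mono2) (auto simp: K_def \<tau>w_def arcsin_density_nonneg)
  also have "\<dots> \<le> T n / 8"
    using T_ge_twice_lower_half[OF assms(3)] by (simp add: \<tau>w_def)
  finally show ?thesis by (simp add: \<Delta>_def mult_ac)
qed

definition arcsin_gap :: "real \<Rightarrow> real" where
  "arcsin_gap K = arcsin (- 4 / K) - arcsin (4 / K - 1)"

lemma arcsin_gap_tendsto: "(arcsin_gap \<longlongrightarrow> pi / 2) at_top"
proof -
  have inv: "((\<lambda>K. 4 / K) \<longlongrightarrow> 0) (at_top :: real filter)" by real_asymp
  have in_range: "\<forall>\<^sub>F K in at_top. - 4 / K \<in> {-1..1} \<and> 4 / K - 1 \<in> {-1..1::real}"
    using eventually_ge_at_top[of 4] by eventually_elim (auto simp: field_simps)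
  have "((\<lambda>K. arcsin (- 4 / K)) \<longlongrightarrow> arcsin 0) at_top"
    using tendsto_minus[OF inv] in_range
    by (intro continuous_on_tendsto_compose[OF continuous_on_arcsin']) (auto elim: eventually_mono)
  moreover have "((\<lambda>K. arcsin (4 / K - 1)) \<longlongrightarrow> arcsin (- 1)) at_top"
    using tendsto_diff[OF inv tendsto_const[of 1]] in_range
    by (intro continuous_on_tendsto_compose[OF continuous_on_arcsin']) (auto elim: eventually_mono)
  ultimately show ?thesis unfolding arcsin_gap_def[abs_def] using tendsto_diff by fastforce
qed

lemma arcsin_gap_nonneg: "8 \<le> K \<Longrightarrow> 0 \<le> arcsin_gap K"
  unfolding arcsin_gap_def by (simp add: arcsin_le_arcsin field_simps)

lemma arcsin_gap_le_arcsin_increment: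
  fixes n h a K :: real
  assumes "4 \<le> K" "K \<le> n" "0 \<le> a" "a \<le> n / K" "n / 2 - 1 \<le> h" "h \<le> n"
  shows "arcsin_gap K \<le> arcsin_primitive n (h - a) - arcsin_primitive n (2 * a)"
proof -
  have "1 \<le> n / K" "0 < n" using assms by (simp_all add: field_simps)
  have "n / K \<le> n / 4" using assms \<open>0 < n\<close> by (intro divide_left_mono) auto
  have "arcsin (- 4 / K) = arcsin_primitive n (n / 2 - 2 * (n / K))"
    using \<open>0 < n\<close> assms(1) by (simp add: arcsin_primitive_def field_simps)
  also have "\<dots> \<le> arcsin_primitive n (h - a)"
  proof (rule arcsin_primitive_mono)
    show "0 \<le> n / 2 - 2 * (n / K)" using \<open>n / K \<le> n / 4\<close> \<open>0 < n\<close> by linarith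
    show "n / 2 - 2 * (n / K) \<le> h - a" using assms(4,5) \<open>1 \<le> n / K\<close> by linarith
    show "h - a \<le> n" using assms(3,6) by linarith
  qed (fact \<open>0 < n\<close>)
  finally have "arcsin (- 4 / K) \<le> arcsin_primitive n (h - a)" .
  moreover have "arcsin_primitive n (2 * a) \<le> arcsin_primitive n (2 * (n / K))"
  proof (rule arcsin_primitive_mono)
    show "2 * (n / K) \<le> n" using \<open>n / K \<le> n / 4\<close> \<open>0 < n\<close> by linarith
    show "0 \<le> 2 * a" "2 * a \<le> 2 * (n / K)" using assms(3,4) by simp_all
  qed (fact \<open>0 < n\<close>)
  moreover have "arcsin_primitive n (2 * (n / K)) = arcsin (4 / K - 1)"
    using \<open>0 < n\<close> assms(1) by (simp add: arcsin_primitive_def field_simps)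
  ultimately show ?thesis unfolding arcsin_gap_def by linarith
qed

lemma nat_floor_sqrt_bounds:
  fixes x :: real
  assumes "1 \<le> x"
  shows "(real (nat \<lfloor>sqrt x\<rfloor>))\<^sup>2 \<le> x" "x \<le> 4 * (real (nat \<lfloor>sqrt x\<rfloor>))\<^sup>2" "1 \<le> nat \<lfloor>sqrt x\<rfloor>"
proof -
  define s where "s = sqrt x"
  have "1 \<le> s" using assms by (simp add: s_def)
  have floor: "real (nat \<lfloor>s\<rfloor>) \<le> s" "s < real (nat \<lfloor>s\<rfloor>) + 1"
    using \<open>1 \<le> s\<close> by linarith+
  have "s\<^sup>2 = x" using assms by (simp add: s_def)
  have "(real (nat \<lfloor>s\<rfloor>))\<^sup>2 \<le> s\<^sup>2" using floor(1) by (intro power_mono) auto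
  then show "(real (nat \<lfloor>sqrt x\<rfloor>))\<^sup>2 \<le> x" using \<open>s\<^sup>2 = x\<close> by (simp add: s_def)
  have "0 < real (nat \<lfloor>s\<rfloor>)" using floor(2) \<open>1 \<le> s\<close> by linarith
  then have "1 \<le> nat \<lfloor>s\<rfloor>" by linarith
  then show "1 \<le> nat \<lfloor>sqrt x\<rfloor>" by (simp add: s_def)
  have "s \<le> 2 * real (nat \<lfloor>s\<rfloor>)" using floor(2) \<open>1 \<le> nat \<lfloor>s\<rfloor>\<close> by linarith
  then have "s\<^sup>2 \<le> (2 * real (nat \<lfloor>s\<rfloor>))\<^sup>2" using \<open>1 \<le> s\<close> by (intro power_mono) auto
  then show "x \<le> 4 * (real (nat \<lfloor>sqrt x\<rfloor>))\<^sup>2"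
    using \<open>s\<^sup>2 = x\<close> by (simp add: s_def power_mult_distrib)
qed

lemma ln_nat_floor_sqrt_ge:
  fixes x :: real
  assumes "1 \<le> x"
  shows "ln (x / 4) / 2 \<le> ln (real (nat \<lfloor>sqrt x\<rfloor>))"
proof -
  note A = nat_floor_sqrt_bounds[OF assms]
  have "ln (x / 4) \<le> ln ((real (nat \<lfloor>sqrt x\<rfloor>))\<^sup>2)"
    using A(2,3) assms by (subst ln_le_cancel_iff) auto
  also have "\<dots> = 2 * ln (real (nat \<lfloor>sqrt x\<rfloor>))" using A(3) by (simp add: ln_realpow)
  finally show ?thesis by simp
qed

lemma T_ge_arcsin_gap_ln_squared:
  fixes n :: nat and K :: real
  assumes "16 \<le> K" "4 * K \<le> real n"
  shows "12 / pi\<^sup>2 * arcsin_gap K * (ln (real n) - ln (4 * K))\<^sup>2 \<le> T n"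
proof -
  define A where "A = nat \<lfloor>sqrt (n / K)\<rfloor>"
  define h where "h = (n - 1) div 2"
  have "1 \<le> n / K" using assms by (simp add: field_simps)
  note A = nat_floor_sqrt_bounds[OF this, folded A_def]
  have "64 \<le> real n" using assms by linarith
  then have "2 * h < n" "n - 2 \<le> 2 * h" by (simp_all add: h_def)
  then have h_real: "real n / 2 - 1 \<le> real h" "real h \<le> real n"
    using \<open>64 \<le> real n\<close> by (simp_all add: of_nat_diff)
  have "2 * (real A)\<^sup>2 \<le> 2 * (real n / K)" using A(1) by simp
  also have "\<dots> \<le> real n / 2 - 1"
  proof -
    have "real n / K \<le> real n / 16" using assms(1) by (intro divide_left_mono) auto
    then show ?thesis using \<open>64 \<le> real n\<close> by linarith
  qed
  finally have "real (2 * A\<^sup>2) \<le> real h" using h_real(1) by simp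
  then have "2 * A\<^sup>2 \<le> h" by (simp only: of_nat_le_iff)
  have "arcsin_gap K
      \<le> arcsin_primitive n (real h - real (A\<^sup>2)) - arcsin_primitive n (2 * real (A\<^sup>2))"
    using assms A(1) h_real by (intro arcsin_gap_le_arcsin_increment) auto
  then have gap: "arcsin_gap K \<le> arcsin_primitive n (h - A\<^sup>2) - arcsin_primitive n (2 * A\<^sup>2)"
    using \<open>2 * A\<^sup>2 \<le> h\<close> by (simp add: of_nat_diff)
  have "(ln (real n) - ln (4 * K)) / 2 = ln (real n / K / 4) / 2"
    using assms by (simp add: ln_div)
  also have "\<dots> \<le> ln (real A)"
    unfolding A_def using \<open>1 \<le> n / K\<close> by (rule ln_nat_floor_sqrt_ge)
  finally have ln_A: "(ln (real n) - ln (4 * K)) / 2 \<le> ln (real A)" .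
  have "0 \<le> ln (real n) - ln (4 * K)" using assms by simp
  have "0 \<le> arcsin_gap K" using assms by (intro arcsin_gap_nonneg) simp
  have "12 / pi\<^sup>2 * arcsin_gap K * (ln (real n) - ln (4 * K))\<^sup>2
      = 8 * arcsin_gap K * (6 / pi\<^sup>2 * ((ln (real n) - ln (4 * K)) / 2)\<^sup>2)"
    by (simp add: power_divide)
  also have "\<dots> \<le> 8 * arcsin_gap K * (6 / pi\<^sup>2 * (ln (real A))\<^sup>2)"
    using ln_A \<open>0 \<le> ln (real n) - ln (4 * K)\<close> \<open>0 \<le> arcsin_gap K\<close>
    by (intro mult_left_mono power_mono) auto
  also have "\<dots> \<le> 8 * arcsin_gap K * coprime_recip_sum A"
    using \<open>0 \<le> arcsin_gap K\<close> ln_squared_le_coprime_recip_sum by (intro mult_left_mono) auto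
  also have "\<dots> \<le> 8 * (arcsin_primitive n (h - A\<^sup>2) - arcsin_primitive n (2 * A\<^sup>2))
      * coprime_recip_sum A"
    using gap coprime_recip_sum_nonneg by (intro mult_right_mono) auto
  also have "\<dots> \<le> T n"
    using T_ge_coprime_recip_sum[OF A(3) \<open>2 * A\<^sup>2 \<le> h\<close> \<open>2 * h < n\<close>] .
  finally show ?thesis .
qed

theorem lemma6p4:
  shows "\<exists>g :: nat \<Rightarrow> real. g \<longlonglongrightarrow> 0 \<and>
           (\<forall>\<^sub>F n in sequentially. T n \<ge> (6 + g n) / pi * (ln (real n))\<^sup>2)"
proof -
  \<comment> \<open>The witness comes from T_ge_arcsin_gap_ln_squared with K = ln n, which grows, so
    arcsin_gap K tends to pi / 2, but slowly enough that ln (4 K) = o(ln n).\<close>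
  define g where "g n = 6 * (2 / pi * arcsin_gap (ln (real n))
    * (1 - ln (4 * ln (real n)) / ln (real n))\<^sup>2 - 1)" for n :: nat
  have "(\<lambda>n. arcsin_gap (ln (real n))) \<longlonglongrightarrow> pi / 2"
    by (rule filterlim_compose[OF arcsin_gap_tendsto]) real_asymp
  moreover have "(\<lambda>n. ln (4 * ln (real n)) / ln (real n)) \<longlonglongrightarrow> 0" by real_asymp
  ultimately have "g \<longlonglongrightarrow> 6 * (2 / pi * (pi / 2) * (1 - 0)\<^sup>2 - 1)"
    unfolding g_def by (intro tendsto_intros)
  then have "g \<longlonglongrightarrow> 0" by simp
  have "\<forall>\<^sub>F n in sequentially. 16 \<le> ln (real n)"
    and "\<forall>\<^sub>F n in sequentially. 4 * ln (real n) \<le> real n" by real_asymp+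
  then have "\<forall>\<^sub>F n in sequentially. T n \<ge> (6 + g n) / pi * (ln (real n))\<^sup>2"
  proof eventually_elim
    case (elim n)
    have "(6 + g n) / pi * (ln (real n))\<^sup>2
        = 12 / pi\<^sup>2 * arcsin_gap (ln (real n)) * (ln (real n) - ln (4 * ln (real n)))\<^sup>2"
      using elim by (simp add: g_def field_simps power2_eq_square)
    also have "\<dots> \<le> T n" using elim by (intro T_ge_arcsin_gap_ln_squared) auto
    finally show ?case .
  qed
  with \<open>g \<longlonglongrightarrow> 0\<close> show ?thesis by blast
qed

end
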